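(* Let $\mathcal{X}_{k|k-1}\subset\mathbb{R}^n$ and $\mathcal{V}_k\subset\mathbb{R}^r$ be constrained zonotopes and $y_k\in\mathbb{R}^m$. Let $h:\mathbb{R}^n\times\mathbb{R}^r\to\mathbb{R}^m$ and write it as $\varrho^{\rm h}:\mathbb{R}^{n+r}\to\mathbb{R}^m$, $\varrho^{\rm h}(z)=h(x,v)$ for $z=[x^\top\ v^\top]^\top$. Let $\mathcal{Z}_k=\mathcal{X}_{k|k-1}\times\mathcal{V}_k$, let $\mathcal{P}_k\supseteq\mathcal{Z}_k$ be a convex polytope, and suppose $\varrho^{\rm h}=\varrho^{\rm ha}-\varrho^{\rm hb}$ on $\mathcal{P}_k$ where $\varrho^{\rm ha},\varrho^{\rm hb}$ are differentiable and componentwise convex on $\mathcal{P}_k$. Let $\bar z\in\mathcal{P}_k$, let $H=\nabla_z\varrho^{\rm h}(\bar z)=[H^{\rm x}\ H^{\rm v}]$ with $H^{\rm x}=\nabla_x\varrho^{\rm h}(\bar z)$, $H^{\rm v}=\nabla_v\varrho^{\rm h}(\bar z)$, and define $\bar\varrho(z)=\varrho^{\rm h}(\bar z)+H(z-\bar z)$, $\bar\varrho^{\rm a}(z)=\varrho^{\rm ha}(\bar z)+\nabla_z\varrho^{\rm ha}(\bar z)(z-\bar z)$, $\bar\varrho^{\rm b}(z)=\varrho^{\rm hb}(\bar z)+\nabla_z\varrho^{\rm hb}(\bar z)(z-\bar z)$. For $i=1,\ldots,m$ let $$e^-_i=\min_{z\in\mathrm{vert}(\mathcal{P}_k)}\big(\bar\varrho^{\rm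 a}_i(z)-\varrho^{\rm hb}_i(z)-\bar\varrho_i(z)\big),\qquad e^+_i=\max_{z\in\mathrm{vert}(\mathcal{P}_k)}\big(\varrho^{\rm ha}_i(z)-\bar\varrho^{\rm b}_i(z)-\bar\varrho_i(z)\big),$$ and let $\mathcal{R}_k$ be the zonotope $\{\mathrm{diag}(\tfrac12(e^+-e^-)),\tfrac12(e^-+e^+)\}$ (the box $[e^-,e^+]$). Define the constrained zonotope $\mathcal{Y}_k=\big(y_k-\varrho^{\rm h}(\bar z)+H\bar z\big)\oplus(-H^{\rm v}\mathcal{V}_k)\oplus(-\mathcal{R}_k)$. Then $$\{x\in\mathcal{X}_{k|k-1}:\ y_k=h(x,v)\ \text{for some } v\in\mathcal{V}_k\}\subseteq\breve{\mathcal{X}}_k:=\mathcal{X}_{k|k-1}\cap_{H^{\rm x}}\mathcal{Y}_k,$$ and $\breve{\mathcal{X}}_k$ is a constrained zonotope.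
   Context: A constrained zonotope (CZ) is a set $\{G,c,A,b\}=\{G\xi+c:\xi\in[-1,1]^{n_g},\ A\xi=b\}$; a zonotope $\{G,c\}$ has no equality constraints. $\oplus$ is Minkowski sum (vectors treated as singletons), $L\mathcal{X}=\{Lx:x\in\mathcal{X}\}$, $-\mathcal{X}=\{-x:x\in\mathcal{X}\}$, $\times$ is Cartesian product. The generalized intersection is $\mathcal{X}\cap_M\mathcal{W}=\{x\in\mathcal{X}:Mx\in\mathcal{W}\}$. $\mathrm{vert}(\mathcal{P})$ is the vertex set of the polytope $\mathcal{P}$. Vector-valued convexity is componentwise; $\nabla_x$ denotes the Jacobian with respect to the block $x$. *)

theory Defs
  imports "HOL-Analysis.Analysis"
begin

definition CZ :: "nat \<Rightarrow> nat \<Rightarrow> (nat \<Rightarrow> 'a::real_vector) \<Rightarrow> 'a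
    \<Rightarrow> (nat \<Rightarrow> nat \<Rightarrow> real) \<Rightarrow> (nat \<Rightarrow> real) \<Rightarrow> 'a set" where
  "CZ ng nc G c A b =
     {(\<Sum>i<ng. \<xi> i *\<^sub>R G i) + c | \<xi>.
        (\<forall>i<ng. \<bar>\<xi> i\<bar> \<le> 1) \<and> (\<forall>j<nc. (\<Sum>i<ng. A j i * \<xi> i) = b j)}"

definition is_CZ :: "'a::real_vector set \<Rightarrow> bool" where
  "is_CZ S \<longleftrightarrow> (\<exists>ng nc G c A b. S = CZ ng nc G c A b)"

definition zono :: "real^'g^'m \<Rightarrow> real^'m \<Rightarrow> (real^'m) set" where
  "zono G c = {G *v \<xi> + c | \<xi>. \<forall>i. \<bar>\<xi> $ i\<bar> \<le> 1}"

definition diagm :: "real^'m \<Rightarrow> real^'m^'m" where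
  "diagm d = (\<chi> i j. if i = j then d $ i else 0)"

definition msum :: "'a::plus set \<Rightarrow> 'a set \<Rightarrow> 'a set" where
  "msum A B = {a + b | a b. a \<in> A \<and> b \<in> B}"

definition gen_inter :: "(real^'n) set \<Rightarrow> real^'n^'m \<Rightarrow> (real^'m) set \<Rightarrow> (real^'n) set" where
  "gen_inter X M W = {x \<in> X. M *v x \<in> W}"

definition stack :: "real^'n \<Rightarrow> real^'r \<Rightarrow> real^('n::finite + 'r::finite)" where
  "stack x v = (\<chi> i. case i of Inl j \<Rightarrow> x $ j | Inr j \<Rightarrow> v $ j)"

definition xpart :: "real^('n::finite + 'r::finite) \<Rightarrow> real^'n" where
  "xpart z = (\<chi> j. z $ Inl j)"

definition vpart :: "real^('n::finite + 'r::finite) \<Rightarrow> real^'r" where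
  "vpart z = (\<chi> j. z $ Inr j)"

definition xcols :: "real^('n::finite + 'r::finite)^'m \<Rightarrow> real^'n^'m" where
  "xcols H = (\<chi> i j. H $ i $ Inl j)"

definition vcols :: "real^('n::finite + 'r::finite)^'m \<Rightarrow> real^'r^'m" where
  "vcols H = (\<chi> i j. H $ i $ Inr j)"

definition vert :: "'a::real_vector set \<Rightarrow> 'a set" where
  "vert P = {z. z extreme_point_of P}"

end

theory Submission
  imports Defs
begin

text \<open>
  With \<open>z = stack x v\<close> and the affine map \<open>\<rho>bar\<close>, a measurement \<open>y = h x v\<close> reads
  \<open>Hx x = (y - \<rho>h zbar + H zbar) - Hv v - r\<close>, where \<open>r = \<rho>h z - \<rho>bar z\<close> is the
  linearisation error; so it suffices to show \<open>r \<in> R\<close>. On \<open>P\<close> each component of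
  \<open>\<rho>h - \<rho>bar = \<rho>a - \<rho>b - \<rho>bar\<close> lies above the concave function obtained by replacing
  \<open>\<rho>a\<close> with its tangent plane at \<open>zbar\<close>, and below the convex function obtained by
  replacing \<open>\<rho>b\<close> with its tangent plane, since a differentiable convex function dominates
  its tangent planes. Over a polytope a concave function attains its minimum, and a convex
  function its maximum, at a vertex; this gives \<open>em \<le> r \<le> ep\<close>.

  Constrained zonotopes are closed under linear images, Minkowski sums and generalised
  intersections: concatenate generators and constraints, and express \<open>M x \<in> W\<close> by one
  further equality constraint per coordinate.
\<close>

(* Equality constraints are a finite set of rows (a, \<beta>) rather than an indexed matrix,
   so that combining two constraint systems is a union. *)
definition cz_params :: "nat \<Rightarrow> ((nat \<Rightarrow> real) \<times> real) set \<Rightarrow> (nat \<Rightarrow> real) set" where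
  "cz_params n C = {\<xi>. (\<forall>i<n. \<bar>\<xi> i\<bar> \<le> 1) \<and> (\<forall>(a, \<beta>)\<in>C. (\<Sum>i<n. a i * \<xi> i) = \<beta>)}"

definition czono :: "nat \<Rightarrow> (nat \<Rightarrow> 'a::real_vector) \<Rightarrow> 'a \<Rightarrow> ((nat \<Rightarrow> real) \<times> real) set \<Rightarrow> 'a set"
  where "czono n G c C = {(\<Sum>i<n. \<xi> i *\<^sub>R G i) + c | \<xi>. \<xi> \<in> cz_params n C}"

lemma is_CZ_iff_czono: "is_CZ S \<longleftrightarrow> (\<exists>n G c C. finite C \<and> S = czono n G c C)"
proof
  assume "is_CZ S"
  then obtain ng nc G c A b where "S = CZ ng nc G c A b"
    unfolding is_CZ_def by blast
  then have "S = czono ng G c ((\<lambda>j. (A j, b j)) ` {..<nc})"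
    unfolding CZ_def czono_def cz_params_def by auto
  then show "\<exists>n G c C. finite C \<and> S = czono n G c C" by blast
next
  assume "\<exists>n G c C. finite C \<and> S = czono n G c C"
  then obtain n G c C where "finite C" and S: "S = czono n G c C" by blast
  then obtain rows where rows: "set rows = C" using finite_list by blast
  have "S = CZ n (length rows) G c (\<lambda>j. fst (rows ! j)) (\<lambda>j. snd (rows ! j))"
    unfolding S CZ_def czono_def cz_params_def rows[symmetric] all_set_conv_all_nth
    by (simp add: case_prod_beta)
  then show "is_CZ S" unfolding is_CZ_def by blast
qed

lemma is_CZ_czono: "finite C \<Longrightarrow> is_CZ (czono n G c C)"
  unfolding is_CZ_iff_czono by blast

lemma is_CZ_singleton: "is_CZ {c}"
proof -
  have "{c} = czono 0 (\<lambda>_. 0) c {}" by (simp add: czono_def cz_params_def)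
  then show ?thesis by (simp add: is_CZ_czono)
qed

lemma czono_linear_image:
  assumes "linear f"
  shows "f ` czono n G c C = czono n (f \<circ> G) (f c) C"
proof -
  have "f ((\<Sum>i<n. \<xi> i *\<^sub>R G i) + c) = (\<Sum>i<n. \<xi> i *\<^sub>R (f \<circ> G) i) + f c" for \<xi>
    using assms by (simp add: linear_add linear_sum linear_scale)
  moreover have "f ` czono n G c C = {f ((\<Sum>i<n. \<xi> i *\<^sub>R G i) + c) | \<xi>. \<xi> \<in> cz_params n C}"
    unfolding czono_def by blast
  ultimately show ?thesis unfolding czono_def by simp
qed

lemma is_CZ_linear_image: "linear f \<Longrightarrow> is_CZ S \<Longrightarrow> is_CZ (f ` S)"
  unfolding is_CZ_iff_czono using czono_linear_image by metis

definition seq_append :: "nat \<Rightarrow> (nat \<Rightarrow> 'a) \<Rightarrow> (nat \<Rightarrow> 'a) \<Rightarrow> nat \<Rightarrow> 'a" where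
  "seq_append n f g = (\<lambda>i. if i < n then f i else g (i - n))"

definition append_constraints :: "nat \<Rightarrow> ((nat \<Rightarrow> real) \<times> real) set \<Rightarrow> ((nat \<Rightarrow> real) \<times> real) set
    \<Rightarrow> ((nat \<Rightarrow> real) \<times> real) set" where
  "append_constraints n C D =
     (\<lambda>(a, \<beta>). (seq_append n a (\<lambda>_. 0), \<beta>)) ` C \<union> (\<lambda>(a, \<beta>). (seq_append n (\<lambda>_. 0) a, \<beta>)) ` D"

lemma sum_lessThan_add:
  "(\<Sum>i<m + n. f i :: 'a::comm_monoid_add) = (\<Sum>i<m. f i) + (\<Sum>i<n. f (m + i))"
  for m n :: nat
  by (induction n) (auto simp: add.assoc)

lemma sum_seq_append:
  "(\<Sum>i<m + n. h (seq_append m f g i) (seq_append m f' g' i)) =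
     (\<Sum>i<m. h (f i) (f' i)) + (\<Sum>i<n. h (g i) (g' i))"
  unfolding sum_lessThan_add seq_append_def by simp

lemma ex_seq_append: "(\<exists>\<xi>. P \<xi>) \<longleftrightarrow> (\<exists>\<xi> \<eta>. P (seq_append n \<xi> \<eta>))"
proof -
  have "seq_append n \<xi> (\<lambda>i. \<xi> (n + i)) = \<xi>" for \<xi> :: "nat \<Rightarrow> 'a"
    by (auto simp: seq_append_def)
  then show ?thesis by metis
qed

lemma finite_append_constraints: "finite C \<Longrightarrow> finite D \<Longrightarrow> finite (append_constraints n C D)"
  unfolding append_constraints_def by blast

lemma seq_append_mem_cz_params_iff:
  "seq_append m \<xi> \<eta> \<in> cz_params (m + n) (append_constraints m C D) \<longleftrightarrow>
     \<xi> \<in> cz_params m C \<and> \<eta> \<in> cz_params n D"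
proof -
  have "(\<forall>i<m + n. \<bar>seq_append m \<xi> \<eta> i\<bar> \<le> 1) \<longleftrightarrow> (\<forall>i<m. \<bar>\<xi> i\<bar> \<le> 1) \<and> (\<forall>i<n. \<bar>\<eta> i\<bar> \<le> 1)"
    by (auto simp: seq_append_def) (metis add_diff_cancel_left' add_less_cancel_left not_add_less1)
  moreover have "(\<forall>(a, \<beta>)\<in>append_constraints m C D. (\<Sum>i<m + n. a i * seq_append m \<xi> \<eta> i) = \<beta>) \<longleftrightarrow>
      (\<forall>(a, \<beta>)\<in>C. (\<Sum>i<m. a i * \<xi> i) = \<beta>) \<and> (\<forall>(a, \<beta>)\<in>D. (\<Sum>i<n. a i * \<eta> i) = \<beta>)"
    unfolding append_constraints_def ball_Un by (simp add: sum_seq_append case_prod_unfold)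
  ultimately show ?thesis
    unfolding cz_params_def by auto
qed

lemma czono_msum:
  "msum (czono m G c C) (czono n G' c' D) =
     czono (m + n) (seq_append m G G') (c + c') (append_constraints m C D)"
proof -
  have "x \<in> czono (m + n) (seq_append m G G') (c + c') (append_constraints m C D) \<longleftrightarrow>
      (\<exists>\<xi> \<eta>. x = ((\<Sum>i<m. \<xi> i *\<^sub>R G i) + c) + ((\<Sum>i<n. \<eta> i *\<^sub>R G' i) + c')
        \<and> \<xi> \<in> cz_params m C \<and> \<eta> \<in> cz_params n D)" for x
    unfolding czono_def mem_Collect_eq
    by (subst ex_seq_append[of _ m]) (simp add: sum_seq_append seq_append_mem_cz_params_iff algebra_simps)
  then show ?thesis unfolding msum_def czono_def by blast
qed

lemma is_CZ_msum: "is_CZ A \<Longrightarrow> is_CZ B \<Longrightarrow> is_CZ (msum A B)"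
  unfolding is_CZ_iff_czono using czono_msum finite_append_constraints by metis

lemma mem_cz_params_Un:
  "\<xi> \<in> cz_params n (C \<union> D) \<longleftrightarrow> \<xi> \<in> cz_params n C \<and> (\<forall>(a, \<beta>)\<in>D. (\<Sum>i<n. a i * \<xi> i) = \<beta>)"
  unfolding cz_params_def ball_Un mem_Collect_eq by (simp only: conj_assoc)

lemma czono_gen_inter:
  fixes M :: "real^'n^'m"
  shows "gen_inter (czono m G c C) M (czono n G' c' D) =
    czono (m + n) (seq_append m G (\<lambda>_. 0)) c (append_constraints m C D \<union>
      range (\<lambda>k. (seq_append m (\<lambda>i. (M *v G i) $ k) (\<lambda>i. - G' i $ k), (c' - M *v c) $ k)))"
    (is "_ = czono _ _ _ (_ \<union> ?coupling)")
proof -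
  \<comment> \<open>The parameters of \<open>W\<close> become generators with zero image, coupled to those of \<open>X\<close>
    by one constraint row per coordinate \<open>k\<close> of \<open>M x = w\<close>.\<close>
  have coupling: "(\<forall>(a, \<beta>)\<in>?coupling. (\<Sum>i<m + n. a i * seq_append m \<xi> \<eta> i) = \<beta>) \<longleftrightarrow>
      M *v ((\<Sum>i<m. \<xi> i *\<^sub>R G i) + c) = (\<Sum>i<n. \<eta> i *\<^sub>R G' i) + c'" for \<xi> \<eta>
    by (simp add: sum_seq_append vec_eq_iff vec.sum sum_negf algebra_simps)
  have "x \<in> czono (m + n) (seq_append m G (\<lambda>_. 0)) c (append_constraints m C D \<union> ?coupling) \<longleftrightarrow>
      (\<exists>\<xi> \<eta>. x = (\<Sum>i<m. \<xi> i *\<^sub>R G i) + c \<and> \<xi> \<in> cz_params m C \<and> \<eta> \<in> cz_params n D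
        \<and> M *v ((\<Sum>i<m. \<xi> i *\<^sub>R G i) + c) = (\<Sum>i<n. \<eta> i *\<^sub>R G' i) + c')" for x
    unfolding czono_def mem_Collect_eq
    by (subst ex_seq_append[of _ m])
      (simp only: mem_cz_params_Un coupling seq_append_mem_cz_params_iff sum_seq_append
        scaleR_zero_right sum.neutral_const add_0_right conj_assoc)
  then show ?thesis
    unfolding gen_inter_def set_eq_iff by (auto simp: czono_def)
qed

lemma is_CZ_gen_inter:
  assumes "is_CZ X" and "is_CZ W"
  shows "is_CZ (gen_inter X M W)"
proof -
  obtain m G c C where "finite C" and X: "X = czono m G c C"
    using assms(1) unfolding is_CZ_iff_czono by blast
  obtain n G' c' D where "finite D" and W: "W = czono n G' c' D"
    using assms(2) unfolding is_CZ_iff_czono by blast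
  show ?thesis
    unfolding X W czono_gen_inter
    by (rule is_CZ_czono) (simp add: \<open>finite C\<close> \<open>finite D\<close> finite_append_constraints)
qed

lemma is_CZ_unit_cube: "is_CZ {\<xi> :: real^'g. \<forall>i. \<bar>\<xi> $ i\<bar> \<le> 1}"
proof -
  obtain e :: "nat \<Rightarrow> 'g" where e: "bij_betw e {..<CARD('g)} UNIV"
    using ex_bij_betw_nat_finite[of "UNIV :: 'g set"] by (auto simp: atLeast0LessThan)
  let ?idx = "inv_into {..<CARD('g)} e"
  have coords: "(\<Sum>k<CARD('g). \<eta> k *\<^sub>R axis (e k) 1) = (\<chi> g. \<eta> (?idx g))" for \<eta>
  proof -
    have "(\<Sum>k<CARD('g). \<eta> k *\<^sub>R axis (e k) 1) = (\<Sum>k<CARD('g). \<eta> (?idx (e k)) *\<^sub>R axis (e k) 1)"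
      using e by (intro sum.cong) (auto simp: bij_betw_inv_into_left)
    also have "\<dots> = (\<Sum>g\<in>UNIV. \<eta> (?idx g) *\<^sub>R axis g 1)"
      by (rule sum.reindex_bij_betw[OF e])
    also have "\<dots> = (\<chi> g. \<eta> (?idx g))"
      using basis_expansion[of "\<chi> g. \<eta> (?idx g)"] by (simp add: scalar_mult_eq_scaleR)
    finally show ?thesis .
  qed
  have idx: "?idx g < CARD('g)" for g
    using inv_into_into[of g e "{..<CARD('g)}"] bij_betw_imp_surj_on[OF e] by auto
  have "{\<xi> :: real^'g. \<forall>i. \<bar>\<xi> $ i\<bar> \<le> 1} = czono CARD('g) (\<lambda>k. axis (e k) 1) 0 {}"
  proof (intro set_eqI iffI)
    fix \<xi> :: "real^'g" assume "\<xi> \<in> {\<xi>. \<forall>i. \<bar>\<xi> $ i\<bar> \<le> 1}"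
    moreover have "\<xi> = (\<Sum>k<CARD('g). \<xi> $ e k *\<^sub>R axis (e k) 1)"
      unfolding coords using e by (simp add: vec_eq_iff bij_betw_inv_into_right)
    ultimately show "\<xi> \<in> czono CARD('g) (\<lambda>k. axis (e k) 1) 0 {}"
      unfolding czono_def cz_params_def by force
  next
    fix \<xi> :: "real^'g" assume "\<xi> \<in> czono CARD('g) (\<lambda>k. axis (e k) 1) 0 {}"
    then show "\<xi> \<in> {\<xi>. \<forall>i. \<bar>\<xi> $ i\<bar> \<le> 1}"
      unfolding czono_def cz_params_def coords using idx by auto
  qed
  then show ?thesis by (simp add: is_CZ_czono)
qed

lemma is_CZ_zono: "is_CZ (zono D c)"
proof -
  have "zono D c = msum ((*v) D ` {\<xi>. \<forall>i. \<bar>\<xi> $ i\<bar> \<le> 1}) {c}"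
    unfolding zono_def msum_def by blast
  then show ?thesis
    by (simp add: is_CZ_msum is_CZ_linear_image is_CZ_unit_cube is_CZ_singleton)
qed

lemma convex_on_imp_above_tangent_plane:
  fixes f :: "'a::real_normed_vector \<Rightarrow> real"
  assumes convex: "convex_on S f" and x: "x \<in> S" and z: "z \<in> S"
    and deriv: "(f has_derivative f') (at x)"
  shows "f x + f' (z - x) \<le> f z"
proof -
  define \<phi> where "\<phi> = (\<lambda>t::real. f (x + t *\<^sub>R (z - x)))"
  have "((\<lambda>t. x + t *\<^sub>R (z - x)) has_derivative (\<lambda>t. t *\<^sub>R (z - x))) (at 0)"
    by (auto intro!: derivative_eq_intros)
  from has_derivative_compose[OF this, of f f'] deriv
  have "(\<phi> has_derivative (\<lambda>t. f' (t *\<^sub>R (z - x)))) (at 0)"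
    by (simp add: \<phi>_def)
  moreover have "(\<lambda>t. f' (t *\<^sub>R (z - x))) = (\<lambda>t. f' (z - x) * t)"
    using has_derivative_linear[OF deriv] by (simp add: linear_scale mult.commute)
  ultimately have "(\<phi> has_real_derivative f' (z - x)) (at 0)"
    by (simp add: has_field_derivative_def)
  then have "(\<phi> has_real_derivative f' (z - x)) (at 0 within {0<..})"
    by (rule has_field_derivative_at_within)
  then have slope: "((\<lambda>t. (\<phi> t - \<phi> 0) / t) \<longlongrightarrow> f' (z - x)) (at_right 0)"
    by (simp add: has_field_derivative_iff)
  have "\<forall>\<^sub>F t in at_right 0. t \<in> {0<..<1::real}"
    by (rule eventually_at_right_real) simp
  then have "\<forall>\<^sub>F t in at_right 0. (\<phi> t - \<phi> 0) / t \<le> f z - f x"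
  proof eventually_elim
    case (elim t)
    have "\<phi> t = f ((1 - t) *\<^sub>R x + t *\<^sub>R z)"
      by (simp add: \<phi>_def algebra_simps)
    also have "\<dots> \<le> (1 - t) * f x + t * f z"
      using elim x z by (intro convex_onD[OF convex]) auto
    finally show ?case
      using elim by (simp add: \<phi>_def field_simps)
  qed
  then have "f' (z - x) \<le> f z - f x"
    by (intro tendsto_upperbound[OF slope]) auto
  then show ?thesis by simp
qed

lemma convex_on_affine:
  fixes L :: "'a::real_vector \<Rightarrow> real"
  assumes "linear L" and "convex S"
  shows "convex_on S (\<lambda>z. c + L (z - z0))"
proof (rule convex_onI[OF _ \<open>convex S\<close>])
  fix t x y
  have "(1 - t) *\<^sub>R x + t *\<^sub>R y - z0 = (1 - t) *\<^sub>R (x - z0) + t *\<^sub>R (y - z0)"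
    by (simp add: algebra_simps)
  then have "L ((1 - t) *\<^sub>R x + t *\<^sub>R y - z0) = (1 - t) * L (x - z0) + t * L (y - z0)"
    using \<open>linear L\<close> by (simp only: linear_add linear_scale real_scaleR_def)
  then show "c + L ((1 - t) *\<^sub>R x + t *\<^sub>R y - z0) \<le> (1 - t) * (c + L (x - z0)) + t * (c + L (y - z0))"
    by (simp add: algebra_simps)
qed

lemma concave_on_affine:
  fixes L :: "'a::real_vector \<Rightarrow> real"
  assumes "linear L" and "convex S"
  shows "concave_on S (\<lambda>z. c + L (z - z0))"
  using convex_on_affine[of "\<lambda>w. - L w" S "- c" z0] assms
  by (simp add: concave_on_def linear_compose_neg)

lemma polytope_vert:
  fixes P :: "'a::euclidean_space set"
  assumes "polytope P"
  shows "finite (vert P)" and "convex hull (vert P) = P"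
proof -
  obtain V where "finite V" and P: "P = convex hull V"
    using assms unfolding polytope_def by blast
  then have "vert P \<subseteq> V"
    unfolding vert_def using extreme_points_of_convex_hull by blast
  then show "finite (vert P)" using \<open>finite V\<close> finite_subset by blast
  show "convex hull (vert P) = P" unfolding vert_def
    using Krein_Milman_Minkowski[OF polytope_imp_compact[OF assms] polytope_imp_convex[OF assms]]
    by simp
qed

lemma polytope_convex_on_le_Max_vert:
  fixes P :: "'a::euclidean_space set"
  assumes P: "polytope P" and "convex_on P f" and "z \<in> P"
  shows "f z \<le> Max (f ` vert P)"
proof -
  have "\<forall>x\<in>vert P. f x \<le> Max (f ` vert P)"
    using polytope_vert(1)[OF P] by simp
  then show ?thesis
    using convex_on_convex_hull_bound[of "vert P" f] assms polytope_vert(2)[OF P] by simp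
qed

lemma polytope_concave_on_Min_vert_le:
  fixes P :: "'a::euclidean_space set"
  assumes P: "polytope P" and "concave_on P f" and "z \<in> P"
  shows "Min (f ` vert P) \<le> f z"
proof -
  have "\<forall>x\<in>vert P. - f x \<le> - Min (f ` vert P)"
    using polytope_vert(1)[OF P] by simp
  then have "\<forall>x\<in>P. - f x \<le> - Min (f ` vert P)"
    using convex_on_convex_hull_bound[of "vert P" "\<lambda>x. - f x" "- Min (f ` vert P)"]
      assms(2) polytope_vert(2)[OF P]
    by (simp add: concave_on_def)
  then show ?thesis using \<open>z \<in> P\<close> by simp
qed

lemma dc_linearization_error_bounds:
  fixes fa fb :: "'a::euclidean_space \<Rightarrow> real"
  assumes P: "polytope P" and fa: "convex_on P fa" and fb: "convex_on P fb"
    and da: "(fa has_derivative Da) (at z0)" and db: "(fb has_derivative Db) (at z0)"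
    and L: "linear L" and z0: "z0 \<in> P" and z: "z \<in> P"
  shows "Min ((\<lambda>z. fa z0 + Da (z - z0) - fb z - (c + L (z - z0))) ` vert P)
           \<le> fa z - fb z - (c + L (z - z0))"
    and "fa z - fb z - (c + L (z - z0))
           \<le> Max ((\<lambda>z. fa z - (fb z0 + Db (z - z0)) - (c + L (z - z0))) ` vert P)"
proof -
  have "convex P" using P by (rule polytope_imp_convex)
  note affine = convex_on_affine[OF _ this] concave_on_affine[OF _ this]
  have "concave_on P (\<lambda>z. fa z0 + Da (z - z0) - fb z - (c + L (z - z0)))"
    using has_derivative_linear[OF da] L fb
    by (intro concave_on_diff affine)
  then have "Min ((\<lambda>z. fa z0 + Da (z - z0) - fb z - (c + L (z - z0))) ` vert P)
      \<le> fa z0 + Da (z - z0) - fb z - (c + L (z - z0))"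
    by (rule polytope_concave_on_Min_vert_le[OF P _ z])
  also have "\<dots> \<le> fa z - fb z - (c + L (z - z0))"
    using convex_on_imp_above_tangent_plane[OF fa z0 z da] by simp
  finally show "Min ((\<lambda>z. fa z0 + Da (z - z0) - fb z - (c + L (z - z0))) ` vert P)
           \<le> fa z - fb z - (c + L (z - z0))" .
  have "fa z - fb z - (c + L (z - z0)) \<le> fa z - (fb z0 + Db (z - z0)) - (c + L (z - z0))"
    using convex_on_imp_above_tangent_plane[OF fb z0 z db] by simp
  also have "convex_on P (\<lambda>z. fa z - (fb z0 + Db (z - z0)) - (c + L (z - z0)))"
    using has_derivative_linear[OF db] L fa
    by (intro convex_on_diff affine)
  then have "fa z - (fb z0 + Db (z - z0)) - (c + L (z - z0))
      \<le> Max ((\<lambda>z. fa z - (fb z0 + Db (z - z0)) - (c + L (z - z0))) ` vert P)"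
    by (rule polytope_convex_on_le_Max_vert[OF P _ z])
  finally show "fa z - fb z - (c + L (z - z0))
           \<le> Max ((\<lambda>z. fa z - (fb z0 + Db (z - z0)) - (c + L (z - z0))) ` vert P)" .
qed

lemma cbox_subset_zono_diagm:
  fixes em ep :: "real^'m"
  shows "cbox em ep \<subseteq> zono (diagm ((1/2) *\<^sub>R (ep - em))) ((1/2) *\<^sub>R (em + ep))"
proof
  fix r assume "r \<in> cbox em ep"
  then have bounds: "em $ i \<le> r $ i \<and> r $ i \<le> ep $ i" for i
    by (simp add: mem_box_cart)
  define d where "d = (1/2) *\<^sub>R (ep - em)"
  define c where "c = (1/2) *\<^sub>R (em + ep)"
  \<comment> \<open>Where \<open>ep $ i = em $ i\<close>, division by zero yields the right coefficient \<open>0\<close>.\<close>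
  define \<xi> where "\<xi> = (\<chi> i. (r $ i - c $ i) / d $ i)"
  have "(diagm d *v \<xi> + c) $ i = r $ i" for i
  proof -
    have "(diagm d *v \<xi>) $ i = d $ i * \<xi> $ i"
      unfolding diagm_def matrix_vector_mult_def by (simp add: if_distrib if_distribR cong: if_cong)
    moreover have "d $ i * \<xi> $ i + c $ i = r $ i"
      using bounds[of i] by (cases "em $ i = ep $ i") (auto simp: \<xi>_def d_def c_def field_simps)
    ultimately show ?thesis by simp
  qed
  then have "diagm d *v \<xi> + c = r" by (simp add: vec_eq_iff)
  moreover have "\<bar>\<xi> $ i\<bar> \<le> 1" for i
    using bounds[of i]
    by (cases "em $ i = ep $ i") (auto simp: \<xi>_def d_def c_def abs_le_iff field_simps)
  ultimately show "r \<in> zono (diagm ((1/2) *\<^sub>R (ep - em))) ((1/2) *\<^sub>R (em + ep))"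
    unfolding zono_def d_def c_def by blast
qed

lemma dc_linearization_error_in_box:
  fixes \<rho>a \<rho>b :: "'a::euclidean_space \<Rightarrow> real^'m"
  assumes P: "polytope P"
    and a_conv: "\<forall>i. convex_on P (\<lambda>z. \<rho>a z $ i)" and b_conv: "\<forall>i. convex_on P (\<lambda>z. \<rho>b z $ i)"
    and da: "(\<rho>a has_derivative Da) (at z0)" and db: "(\<rho>b has_derivative Db) (at z0)"
    and L: "linear L" and z0: "z0 \<in> P" and z: "z \<in> P"
  shows "\<rho>a z - \<rho>b z - (c + L (z - z0)) \<in> cbox
    (\<chi> i. Min ((\<lambda>z. (\<rho>a z0 + Da (z - z0)) $ i - \<rho>b z $ i - (c + L (z - z0)) $ i) ` vert P))
    (\<chi> i. Max ((\<lambda>z. \<rho>a z $ i - (\<rho>b z0 + Db (z - z0)) $ i - (c + L (z - z0)) $ i) ` vert P))"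
proof -
  have component_derivative: "((\<lambda>z. f z $ i) has_derivative (\<lambda>w. f' w $ i)) (at z0)"
    if "(f has_derivative f') (at z0)" for f :: "'a \<Rightarrow> real^'m" and f' i
    using bounded_linear.has_derivative[OF bounded_linear_vec_nth that] .
  have "linear (\<lambda>w. L w $ i)" for i
    using linear_compose[OF L bounded_linear.linear[OF bounded_linear_vec_nth]] by (simp add: comp_def)
  note bounds = dc_linearization_error_bounds[OF P a_conv[rule_format] b_conv[rule_format]
      component_derivative[OF da] component_derivative[OF db] this z0 z]
  show ?thesis
    unfolding mem_box_cart using bounds[where c = "c $ i" for i] by simp
qed

lemma matrix_vector_mult_stack: "H *v stack x v = xcols H *v x + vcols H *v v"
  unfolding matrix_vector_mult_def xcols_def vcols_def stack_def
  by (simp add: vec_eq_iff sum.Plus[where A = UNIV and B = UNIV, simplified] comp_def)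

lemma xpart_stack [simp]: "xpart (stack x v) = x"
  and vpart_stack [simp]: "vpart (stack x v) = v"
  unfolding xpart_def vpart_def stack_def by (simp_all add: vec_eq_iff)

theorem theorem2:
  fixes X :: "(real^'n) set" and V :: "(real^'r) set" and y :: "real^'m"
    and h :: "real^'n \<Rightarrow> real^'r \<Rightarrow> real^'m"
    and \<rho>a \<rho>b :: "real^('n + 'r) \<Rightarrow> real^'m"
    and P :: "(real^('n + 'r)) set" and zbar :: "real^('n + 'r)"
  assumes X_CZ: "is_CZ X" and V_CZ: "is_CZ V"
    and P_poly: "polytope P"
    and Z_sub: "{stack x v | x v. x \<in> X \<and> v \<in> V} \<subseteq> P"
    and dc: "\<forall>z\<in>P. h (xpart z) (vpart z) = \<rho>a z - \<rho>b z"
    and a_diff: "\<forall>z\<in>P. \<rho>a differentiable (at z)"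
    and b_diff: "\<forall>z\<in>P. \<rho>b differentiable (at z)"
    and a_conv: "\<forall>i. convex_on P (\<lambda>z. \<rho>a z $ i)"
    and b_conv: "\<forall>i. convex_on P (\<lambda>z. \<rho>b z $ i)"
    and zbar_in: "zbar \<in> P"
  shows
    "let \<rho>h = (\<lambda>z. h (xpart z) (vpart z));
         H = matrix (frechet_derivative \<rho>h (at zbar));
         Hx = xcols H; Hv = vcols H;
         \<rho>bar = (\<lambda>z. \<rho>h zbar + H *v (z - zbar));
         \<rho>bara = (\<lambda>z. \<rho>a zbar + frechet_derivative \<rho>a (at zbar) (z - zbar));
         \<rho>barb = (\<lambda>z. \<rho>b zbar + frechet_derivative \<rho>b (at zbar) (z - zbar));
         em = (\<chi> i. Min ((\<lambda>z. \<rho>bara z $ i - \<rho>b z $ i - \<rho>bar z $ i) ` vert P));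
         ep = (\<chi> i. Max ((\<lambda>z. \<rho>a z $ i - \<rho>barb z $ i - \<rho>bar z $ i) ` vert P));
         R = zono (diagm ((1/2) *\<^sub>R (ep - em))) ((1/2) *\<^sub>R (em + ep));
         Y = msum (msum {y - \<rho>h zbar + H *v zbar} ((\<lambda>v. - (Hv *v v)) ` V)) (uminus ` R);
         Xb = gen_inter X Hx Y
     in {x \<in> X. \<exists>v\<in>V. y = h x v} \<subseteq> Xb \<and> is_CZ Xb"
proof -
  define \<rho>h where "\<rho>h = (\<lambda>z. h (xpart z) (vpart z))"
  define H where "H = matrix (frechet_derivative \<rho>h (at zbar))"
  define Da where "Da = frechet_derivative \<rho>a (at zbar)"
  define Db where "Db = frechet_derivative \<rho>b (at zbar)"
  define \<rho>bar where "\<rho>bar = (\<lambda>z. \<rho>h zbar + H *v (z - zbar))"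
  \<comment> \<open>No property of \<open>H\<close> is needed: \<open>\<rho>bar\<close> enters both the error box and the centre of \<open>Y\<close>.\<close>
  define em where
    "em = (\<chi> i. Min ((\<lambda>z. (\<rho>a zbar + Da (z - zbar)) $ i - \<rho>b z $ i - \<rho>bar z $ i) ` vert P))"
  define ep where
    "ep = (\<chi> i. Max ((\<lambda>z. \<rho>a z $ i - (\<rho>b zbar + Db (z - zbar)) $ i - \<rho>bar z $ i) ` vert P))"
  define R where "R = zono (diagm ((1/2) *\<^sub>R (ep - em))) ((1/2) *\<^sub>R (em + ep))"
  define Y where "Y = msum (msum {y - \<rho>h zbar + H *v zbar} ((\<lambda>v. - (vcols H *v v)) ` V)) (uminus ` R)"
  have error_in_R: "\<rho>h z - \<rho>bar z \<in> R" if "z \<in> P" for z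
  proof -
    have dc_z: "\<rho>h z = \<rho>a z - \<rho>b z" using dc that by (simp add: \<rho>h_def)
    have "(\<rho>a has_derivative Da) (at zbar)" "(\<rho>b has_derivative Db) (at zbar)"
      using a_diff b_diff zbar_in by (simp_all add: Da_def Db_def frechet_derivative_works)
    then have "\<rho>h z - \<rho>bar z \<in> cbox em ep"
      unfolding em_def ep_def \<rho>bar_def dc_z
      by (intro dc_linearization_error_in_box[OF P_poly a_conv b_conv _ _
            matrix_vector_mul_linear zbar_in that])
    then show ?thesis using cbox_subset_zono_diagm unfolding R_def by blast
  qed
  have "x \<in> gen_inter X (xcols H) Y" if "x \<in> X" "v \<in> V" "y = h x v" for x v
  proof -
    have "stack x v \<in> P" using Z_sub that by blast
    then have "y - \<rho>bar (stack x v) \<in> R"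
      using error_in_R[of "stack x v"] by (simp add: \<rho>h_def that)
    moreover have
      "xcols H *v x = (y - \<rho>h zbar + H *v zbar) + - (vcols H *v v) + - (y - \<rho>bar (stack x v))"
      by (simp add: \<rho>bar_def matrix_vector_mult_diff_distrib matrix_vector_mult_stack)
    ultimately show ?thesis using that unfolding gen_inter_def Y_def msum_def by blast
  qed
  moreover have "is_CZ (gen_inter X (xcols H) Y)"
    unfolding Y_def R_def
    by (intro is_CZ_gen_inter X_CZ is_CZ_msum is_CZ_singleton is_CZ_linear_image V_CZ is_CZ_zono)
      (simp_all add: linear_compose_neg matrix_vector_mul_linear linear_uminus)
  ultimately show ?thesis
    unfolding Let_def Y_def R_def em_def ep_def \<rho>bar_def Da_def Db_def H_def \<rho>h_def by blast
qed

end
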